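(* Under Assumption 1 and the partition setting of the context, the convex relaxation (R) and the Shor relaxation (S) are exact (i.e. $p^\star=v^\star=c^\star$) if the set $S_k$ is empty for every $k\in N_H$. In particular, exactness holds if for each $h\in H$ the numbers $c_{j_h}$ and $a_{ij_h}$, $i\in M$, are either all positive or all negative.
   Context: Let $N=\{1,\dots,n\}$ and $M=\{1,\dots,m\}$. Let ${\bf D}$ and ${\bf A}^i$ ($i\in M$) be real diagonal $n\times n$ matrices, ${\bf c},{\bf a}_i\in\mathbb{R}^n$ ($a_{ij}$ denotes the $j$-th entry of ${\bf a}_i$) and $b_i\in\mathbb{R}$. The diagonal QCQP is (P): $c^\star=\inf\{{\bf x}^\top{\bf D}{\bf x}+2{\bf c}^\top{\bf x} : {\bf x}^\top{\bf A}^i{\bf x}+2{\bf a}_i^\top{\bf x}\le b_i,\ i\in M\}$. Its Shor relaxation is (S): $v^\star=\inf\{{\bf D}\bullet{\bf X}+2{\bf c}^\top{\bf x} : {\bf A}^i\bullet{\bf X}+2{\bf a}_i^\top{\bf x}\le b_i\ (i\in M),\ {\bf X}-{\bf x}{\bf x}^\top\succeq {\bf O}\}$, where ${\bf P}\bullet{\bf Q}=\mathrm{trace}({\bf P}{\bf Q})$. The convex relaxation is (R): $p^\star=\inf\{\sum_{j\in N}D_{jj}z_j+2\sum_{j\in N}c_jx_j : \sum_{j\in N}A^i_{jj}z_j+2\sum_{j\in N}a_{ij}x_j\le b_i\ (i\in M),\ x_j^2\le z_j\ (j\in N)\}$. Assumption 1: (i) the feasible region of (P) is nonempty; (ii) there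 exists $\bar{\bf y}\ge 0$ with $\sum_{i\in M}\bar y_i{\bf A}^i\succ{\bf O}$; (iii) the feasible region of (S) has nonempty interior. For $k\in N$, $S_k$ is the set of $\boldsymbol{\mu}\in\mathbb{R}^m$ satisfying: $D_{kk}+\sum_{i\in M}\mu_iA^i_{kk}=0$; $c_k+\sum_{i\in M}\mu_ia_{ik}=0$; $D_{jj}+\sum_{i\in M}\mu_iA^i_{jj}\ge 0$ for all $j\in N$, $j\ne k$; $\mu_i\ge 0$ for all $i\in M$. Partition setting: $\{N_h\}_{h\in H}$ is a partition of $N$ such that for each $h\in H$ and $i\in M$ there is a number $\xi^{ih}$ with $A^i_{jj}=\xi^{ih}$ for all $j\in N_h$. For each $h\in H$, $d_h^*=\min_{j\in N_h}D_{jj}$ and it is assumed that this minimum is attained at a unique index $j_h\in N_h$. $N_H=\{j_h : h\in H\}$. *)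

theory Defs
  imports "HOL-Analysis.Analysis" "HOL-Library.Disjoint_Sets"
begin

(* Matrices are real^'n^'n, index set N is the finite type 'n, M is the finite type 'm. *)

definition diag_mat :: "real^'n^'n \<Rightarrow> bool" where
  "diag_mat P \<longleftrightarrow> (\<forall>i j. i \<noteq> j \<longrightarrow> P $ i $ j = 0)"

definition sym_mat :: "real^'n^'n \<Rightarrow> bool" where
  "sym_mat P \<longleftrightarrow> transpose P = P"

definition psd_mat :: "real^'n^'n \<Rightarrow> bool" where
  "psd_mat P \<longleftrightarrow> sym_mat P \<and> (\<forall>v. 0 \<le> v \<bullet> (P *v v))"

definition pd_mat :: "real^'n^'n \<Rightarrow> bool" where
  "pd_mat P \<longleftrightarrow> sym_mat P \<and> (\<forall>v. v \<noteq> 0 \<longrightarrow> 0 < v \<bullet> (P *v v))"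

definition frob :: "real^'n^'n \<Rightarrow> real^'n^'n \<Rightarrow> real" where
  "frob P Q = trace (P ** Q)"

definition outer :: "real^'n \<Rightarrow> real^'n \<Rightarrow> real^'n^'n" where
  "outer x y = (\<chi> i j. x $ i * y $ j)"

definition feasP :: "('m::finite \<Rightarrow> real^'n^'n) \<Rightarrow> ('m \<Rightarrow> real^'n) \<Rightarrow> ('m \<Rightarrow> real) \<Rightarrow> (real^'n) set" where
  "feasP A a b = {x. \<forall>i. x \<bullet> (A i *v x) + 2 * (a i \<bullet> x) \<le> b i}"

definition valP :: "real^'n^'n \<Rightarrow> real^'n \<Rightarrow> ('m::finite \<Rightarrow> real^'n^'n) \<Rightarrow> ('m \<Rightarrow> real^'n) \<Rightarrow> ('m \<Rightarrow> real) \<Rightarrow> ereal" where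
  "valP D c A a b = (INF x\<in>feasP A a b. ereal (x \<bullet> (D *v x) + 2 * (c \<bullet> x)))"

definition feasS :: "('m::finite \<Rightarrow> real^'n^'n) \<Rightarrow> ('m \<Rightarrow> real^'n) \<Rightarrow> ('m \<Rightarrow> real) \<Rightarrow> ((real^'n^'n) \<times> (real^'n)) set" where
  "feasS A a b = {(X, x). sym_mat X \<and> (\<forall>i. frob (A i) X + 2 * (a i \<bullet> x) \<le> b i)
                          \<and> psd_mat (X - outer x x)}"

definition valS :: "real^'n^'n \<Rightarrow> real^'n \<Rightarrow> ('m::finite \<Rightarrow> real^'n^'n) \<Rightarrow> ('m \<Rightarrow> real^'n) \<Rightarrow> ('m \<Rightarrow> real) \<Rightarrow> ereal" where
  "valS D c A a b = (INF p\<in>feasS A a b. ereal (frob D (fst p) + 2 * (c \<bullet> snd p)))"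

definition feasR :: "('m::finite \<Rightarrow> real^'n^'n) \<Rightarrow> ('m \<Rightarrow> real^'n) \<Rightarrow> ('m \<Rightarrow> real) \<Rightarrow> ((real^'n) \<times> (real^'n)) set" where
  "feasR A a b = {(x, z). (\<forall>i. (\<Sum>j\<in>UNIV. A i $ j $ j * z $ j) + 2 * (\<Sum>j\<in>UNIV. a i $ j * x $ j) \<le> b i)
                          \<and> (\<forall>j. (x $ j)\<^sup>2 \<le> z $ j)}"

definition valR :: "real^'n^'n \<Rightarrow> real^'n \<Rightarrow> ('m::finite \<Rightarrow> real^'n^'n) \<Rightarrow> ('m \<Rightarrow> real^'n) \<Rightarrow> ('m \<Rightarrow> real) \<Rightarrow> ereal" where
  "valR D c A a b = (INF p\<in>feasR A a b.
      ereal ((\<Sum>j\<in>UNIV. D $ j $ j * snd p $ j) + 2 * (\<Sum>j\<in>UNIV. c $ j * fst p $ j)))"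

definition Sk :: "real^'n^'n \<Rightarrow> real^'n \<Rightarrow> ('m::finite \<Rightarrow> real^'n^'n) \<Rightarrow> ('m \<Rightarrow> real^'n) \<Rightarrow> 'n \<Rightarrow> ('m \<Rightarrow> real) set" where
  "Sk D c A a k = {\<mu>. D $ k $ k + (\<Sum>i\<in>UNIV. \<mu> i * A i $ k $ k) = 0
                     \<and> c $ k + (\<Sum>i\<in>UNIV. \<mu> i * a i $ k) = 0
                     \<and> (\<forall>j. j \<noteq> k \<longrightarrow> D $ j $ j + (\<Sum>i\<in>UNIV. \<mu> i * A i $ j $ j) \<ge> 0)
                     \<and> (\<forall>i. \<mu> i \<ge> 0)}"

definition unique_argmin :: "real^'n^'n \<Rightarrow> 'n set \<Rightarrow> 'n \<Rightarrow> bool" where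
  "unique_argmin D Nh j \<longleftrightarrow> j \<in> Nh \<and> (\<forall>j'\<in>Nh. j' \<noteq> j \<longrightarrow> D $ j $ j < D $ j' $ j')"

(* N_H = { j_h : h \<in> H } where the blocks of the partition are the elements of Ps *)
definition NH :: "real^'n^'n \<Rightarrow> 'n set set \<Rightarrow> 'n set" where
  "NH D Ps = {j. \<exists>Nh\<in>Ps. unique_argmin D Nh j}"

end

theory Submission
  imports Defs
begin

text \<open>
  (R) minimises a linear form in (x, z) over the convex set {z_j >= x_j^2} under linear
  constraints. By Assumption 1(ii) its feasible set is compact, so it has a minimiser (x, z), and
  the interior point of (S) projects to a Slater point of (R), so there are multipliers mu >= 0
  for which (x, z) minimises the Lagrangian  sum_j d_j z_j + 2 e_j x_j  over {z_j >= x_j^2}, where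
  d_j = D_jj + sum_i mu_i A^i_jj  and  e_j = c_j + sum_i mu_i a_ij.  This forces d >= 0, and
  d_j = e_j = 0 wherever z_j > x_j^2. On a block N_h the d_j differ from the D_jj by a constant,
  so d_j = 0 only at j = j_h, and there it means mu lies in S_(j_h). Hence if these sets are empty,
  z = x^2, so x is feasible for (P) and c* <= p* <= v* <= c*. The sign condition makes
  c_k + sum_i mu_i a_ik nonzero for all mu >= 0, so it empties S_k.
\<close>

section \<open>Diagonal matrices\<close>

lemma frob_diag_mat:
  assumes "diag_mat P"
  shows "frob P X = (\<Sum>j\<in>UNIV. P$j$j * X$j$j)"
proof -
  have "(\<Sum>k\<in>UNIV. P$i$k * X$k$i) = P$i$i * X$i$i" for i
  proof -
    have "(\<Sum>k\<in>UNIV. P$i$k * X$k$i) = (\<Sum>k\<in>UNIV. if k = i then P$i$i * X$i$i else 0)"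
      using assms by (intro sum.cong) (auto simp: diag_mat_def)
    then show ?thesis by simp
  qed
  then show ?thesis
    by (simp add: frob_def trace_def matrix_matrix_mult_def)
qed

lemma inner_mult_diag_mat:
  assumes "diag_mat P"
  shows "x \<bullet> (P *v x) = (\<Sum>j\<in>UNIV. P$j$j * (x$j)\<^sup>2)"
proof -
  have "x$i * (\<Sum>k\<in>UNIV. P$i$k * x$k) = P$i$i * (x$i)\<^sup>2" for i
  proof -
    have "(\<Sum>k\<in>UNIV. P$i$k * x$k) = (\<Sum>k\<in>UNIV. if k = i then P$i$i * x$i else 0)"
      using assms by (intro sum.cong) (auto simp: diag_mat_def)
    then show ?thesis by (simp add: power2_eq_square)
  qed
  then show ?thesis
    by (simp add: inner_vec_def matrix_vector_mult_def)
qed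

lemma inner_axis_mult_axis: "axis j 1 \<bullet> (P *v axis j 1) = P$j$j"
  by (simp add: matrix_vector_mult_basis inner_axis' column_def)

lemma psd_mat_diag_nonneg: "psd_mat P \<Longrightarrow> 0 \<le> P$j$j"
  unfolding psd_mat_def by (metis inner_axis_mult_axis)

lemma pd_mat_diag_pos: "pd_mat P \<Longrightarrow> 0 < P$j$j"
  unfolding pd_mat_def by (metis inner_axis_mult_axis axis_eq_0_iff zero_neq_one)

lemma sym_mat_outer: "sym_mat (outer x x)"
  by (simp add: sym_mat_def outer_def transpose_def vec_eq_iff mult.commute)

lemma psd_mat_zero: "psd_mat 0"
  by (simp add: psd_mat_def sym_mat_def transpose_def vec_eq_iff)

lemma outer_diag: "outer x x $ j $ j = (x$j)\<^sup>2"
  by (simp add: outer_def power2_eq_square)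

lemma diag_mat_imp_sym_mat: "diag_mat P \<Longrightarrow> sym_mat P"
  unfolding sym_mat_def diag_mat_def transpose_def by (auto simp: vec_eq_iff) metis

lemma sym_mat_add_scaleR: "sym_mat X \<Longrightarrow> sym_mat P \<Longrightarrow> sym_mat (X + t *\<^sub>R P)"
  unfolding sym_mat_def transpose_def by (auto simp: vec_eq_iff)

section \<open>Multipliers for linear programs over a convex set\<close>

lemma linear_convex_comb:
  "linear f \<Longrightarrow> f (u *\<^sub>R x + v *\<^sub>R y) = u * f x + v * (f y :: real)"
  by (simp add: linear_add linear_scale)

lemma convex_linear_upper_set:
  fixes f :: "'w::real_vector \<Rightarrow> real" and g :: "'m::finite \<Rightarrow> 'w \<Rightarrow> real"
  assumes "convex C" "linear f" "\<And>i. linear (g i)"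
  shows "convex {(u :: real^'m, t). \<exists>w\<in>C. (\<forall>i. g i w - b i \<le> u$i) \<and> f w - p < t}"
proof (rule convexI, clarsimp)
  fix u1 t1 w1 u2 t2 w2 and \<alpha> \<beta> :: real
  assume w1: "w1 \<in> C" "\<forall>i. g i w1 - b i \<le> u1$i" "f w1 - p < t1"
    and w2: "w2 \<in> C" "\<forall>i. g i w2 - b i \<le> u2$i" "f w2 - p < t2"
    and \<alpha>\<beta>: "0 \<le> \<alpha>" "0 \<le> \<beta>" "\<alpha> + \<beta> = 1"
  let ?w = "\<alpha> *\<^sub>R w1 + \<beta> *\<^sub>R w2"
  have "?w \<in> C" using assms(1) w1(1) w2(1) \<alpha>\<beta> by (rule convexD)
  moreover have "g i ?w - b i \<le> \<alpha> * u1$i + \<beta> * u2$i" for i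
  proof -
    have "g i ?w - b i = \<alpha> * (g i w1 - b i) + \<beta> * (g i w2 - b i)"
      using \<alpha>\<beta>(3) linear_convex_comb[OF assms(3)] by (simp add: algebra_simps flip: distrib_right)
    also have "\<dots> \<le> \<alpha> * u1$i + \<beta> * u2$i"
      using w1 w2 \<alpha>\<beta> by (intro add_mono mult_left_mono) auto
    finally show ?thesis .
  qed
  moreover have "f ?w - p < \<alpha> * t1 + \<beta> * t2"
  proof -
    have "f ?w - p = \<alpha> * (f w1 - p) + \<beta> * (f w2 - p)"
      using \<alpha>\<beta>(3) linear_convex_comb[OF assms(2)] by (simp add: algebra_simps flip: distrib_right)
    also have "\<dots> < \<alpha> * t1 + \<beta> * t2"
      using w1 w2 \<alpha>\<beta> by (smt (verit) mult_left_mono mult_strict_left_mono)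
    finally show ?thesis .
  qed
  ultimately show "\<exists>w\<in>C. (\<forall>i. g i w - b i \<le> \<alpha> * u1$i + \<beta> * u2$i) \<and> f w - p < \<alpha> * t1 + \<beta> * t2"
    by blast
qed

lemma nonneg_if_ray_nonneg:
  fixes \<alpha> \<beta> :: real
  assumes "\<And>T. 0 \<le> T \<Longrightarrow> 0 \<le> \<alpha> + T * \<beta>"
  shows "0 \<le> \<beta>"
proof (rule ccontr)
  assume "\<not> 0 \<le> \<beta>"
  then have "\<beta> < 0" by simp
  define T where "T = (\<bar>\<alpha>\<bar> + 1) / - \<beta>"
  have "0 \<le> T" using \<open>\<beta> < 0\<close> by (simp add: T_def divide_nonneg_neg)
  moreover have "T * \<beta> = - (\<bar>\<alpha>\<bar> + 1)" using \<open>\<beta> < 0\<close> by (simp add: T_def)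
  ultimately show False using assms[of T] abs_ge_self[of \<alpha>] by linarith
qed

lemma separating_hyperplane_linear_upper_set:
  fixes f :: "'w::real_vector \<Rightarrow> real" and g :: "'m::finite \<Rightarrow> 'w \<Rightarrow> real"
  assumes "convex C" and lin: "linear f" "\<And>i. linear (g i)"
    and opt: "\<And>w. w \<in> C \<Longrightarrow> \<forall>i. g i w \<le> b i \<Longrightarrow> p \<le> f w"
  obtains l l0 where "(l, l0) \<noteq> 0"
    "\<And>w u t. w \<in> C \<Longrightarrow> \<forall>i. g i w - b i \<le> u$i \<Longrightarrow> f w - p < t \<Longrightarrow> 0 \<le> l \<bullet> u + l0 * t"
proof -
  let ?S = "{(u :: real^'m, t). \<exists>w\<in>C. (\<forall>i. g i w - b i \<le> u$i) \<and> f w - p < t}"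
  have "0 \<notin> ?S"
  proof
    assume "0 \<in> ?S"
    then obtain w where "w \<in> C" "\<forall>i. g i w \<le> b i" "f w < p"
      by (auto simp: zero_prod_def)
    with opt show False by fastforce
  qed
  with convex_linear_upper_set[of C f g b p, OF \<open>convex C\<close> lin]
  have "\<exists>s. s \<noteq> 0 \<and> (\<forall>s'\<in>?S. 0 \<le> s \<bullet> s')"
    by (rule separating_hyperplane_set_0)
  then obtain s where "s \<noteq> 0" and sep: "\<forall>s'\<in>?S. 0 \<le> s \<bullet> s'"
    by blast
  obtain l l0 where s: "s = (l, l0)"
    by (cases s)
  show ?thesis
  proof (rule that)
    show "(l, l0) \<noteq> 0" using \<open>s \<noteq> 0\<close> s by simp
    fix w u t assume "w \<in> C" "\<forall>i. g i w - b i \<le> u$i" "f w - p < t"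
    then have "(u, t) \<in> ?S" by blast
    then show "0 \<le> l \<bullet> u + l0 * t" using sep s by fastforce
  qed
qed

lemma fritz_john_linear:
  fixes f :: "'w::real_vector \<Rightarrow> real" and g :: "'m::finite \<Rightarrow> 'w \<Rightarrow> real"
  assumes C: "convex C" "w0 \<in> C" and lin: "linear f" "\<And>i. linear (g i)"
    and opt: "\<And>w. w \<in> C \<Longrightarrow> \<forall>i. g i w \<le> b i \<Longrightarrow> p \<le> f w"
  obtains l l0 where "\<forall>i. 0 \<le> l $ i" "0 \<le> l0" "(l, l0) \<noteq> 0"
    "\<And>w. w \<in> C \<Longrightarrow> 0 \<le> (\<Sum>i\<in>UNIV. l $ i * (g i w - b i)) + l0 * (f w - p)"
proof -
  obtain l l0 where nz: "(l, l0) \<noteq> 0"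
    and sep: "\<And>w u t. w \<in> C \<Longrightarrow> \<forall>i. g i w - b i \<le> u$i \<Longrightarrow> f w - p < t \<Longrightarrow> 0 \<le> l \<bullet> u + l0 * t"
    using separating_hyperplane_linear_upper_set[of C f g b p, OF C(1) lin opt] by blast
  define u0 where "u0 = (\<chi> i. g i w0 - b i)"
  define t0 where "t0 = f w0 - p + 1"
  have l_nonneg: "0 \<le> l $ i" for i
  proof (rule nonneg_if_ray_nonneg)
    fix T :: real assume "0 \<le> T"
    then have "0 \<le> l \<bullet> (u0 + T *\<^sub>R axis i 1) + l0 * t0"
      using C(2) by (intro sep) (auto simp: u0_def t0_def axis_def)
    then show "0 \<le> (l \<bullet> u0 + l0 * t0) + T * l $ i"
      by (simp add: inner_add_right inner_axis algebra_simps)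
  qed
  have l0: "0 \<le> l0"
  proof (rule nonneg_if_ray_nonneg)
    fix T :: real assume "0 \<le> T"
    then show "0 \<le> (l \<bullet> u0 + l0 * t0) + T * l0"
      using C(2) sep[of w0 u0 "t0 + T"] by (simp add: u0_def t0_def algebra_simps)
  qed
  have FJ: "0 \<le> (\<Sum>i\<in>UNIV. l $ i * (g i w - b i)) + l0 * (f w - p)" if w: "w \<in> C" for w
  proof -
    let ?Q = "l \<bullet> (\<chi> i. g i w - b i) + l0 * (f w - p)"
    have "- ?Q \<le> 0"
    proof (rule field_le_epsilon)
      fix \<epsilon> :: real assume "0 < \<epsilon>"
      have "0 \<le> l \<bullet> (\<chi> i. g i w - b i) + l0 * (f w - p + \<epsilon> / (l0 + 1))"
        using w \<open>0 < \<epsilon>\<close> l0 by (intro sep) auto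
      moreover have "l0 * (\<epsilon> / (l0 + 1)) \<le> \<epsilon>"
        using \<open>0 < \<epsilon>\<close> l0 by (simp add: field_simps)
      ultimately show "- ?Q \<le> 0 + \<epsilon>" by (simp add: algebra_simps)
    qed
    then show ?thesis by (simp add: inner_vec_def)
  qed
  show ?thesis by (rule that[OF allI[OF l_nonneg] l0 nz FJ])
qed

lemma lagrange_multipliers_linear_strict:
  fixes f :: "'w::real_vector \<Rightarrow> real" and g :: "'m::finite \<Rightarrow> 'w \<Rightarrow> real"
  assumes C: "convex C" and lin: "linear f" "\<And>i. linear (g i)"
    and opt: "\<And>w. w \<in> C \<Longrightarrow> \<forall>i. g i w \<le> b i \<Longrightarrow> p \<le> f w"
    and slater: "wb \<in> C" "\<And>i. g i wb < b i"
  obtains \<mu> where "\<forall>i. 0 \<le> \<mu> i" "\<And>w. w \<in> C \<Longrightarrow> p \<le> f w + (\<Sum>i\<in>UNIV. \<mu> i * (g i w - b i))"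
proof -
  obtain l l0 where l: "\<forall>i. 0 \<le> l $ i" "0 \<le> l0" "(l, l0) \<noteq> 0"
    and FJ: "\<And>w. w \<in> C \<Longrightarrow> 0 \<le> (\<Sum>i\<in>UNIV. l $ i * (g i w - b i)) + l0 * (f w - p)"
    using fritz_john_linear[of C wb f g b p, OF C slater(1) lin opt] by blast
  have "l0 \<noteq> 0"
  proof
    assume "l0 = 0"
    then obtain i where "l $ i \<noteq> 0" using l(3) by (auto simp: vec_eq_iff zero_prod_def)
    then have "l $ i * (g i wb - b i) < 0"
      using l(1) slater(2) by (simp add: mult_pos_neg order_le_neq_trans)
    moreover have "\<forall>j\<in>UNIV. l $ j * (g j wb - b j) \<le> 0"
      using l(1) slater(2) by (simp add: mult_nonneg_nonpos less_imp_le)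
    ultimately have "(\<Sum>j\<in>UNIV. l $ j * (g j wb - b j)) < 0"
      using sum_strict_mono_ex1[of UNIV "\<lambda>j. l $ j * (g j wb - b j)" "\<lambda>_. 0"] by auto
    with FJ[OF slater(1)] \<open>l0 = 0\<close> show False by simp
  qed
  with l(2) have "0 < l0" by simp
  show ?thesis
  proof (rule that[of "\<lambda>i. l $ i / l0"])
    show "\<forall>i. 0 \<le> l $ i / l0" using l(1) \<open>0 < l0\<close> by simp
    fix w assume "w \<in> C"
    then have "0 \<le> ((\<Sum>i\<in>UNIV. l $ i * (g i w - b i)) + l0 * (f w - p)) / l0"
      using FJ \<open>0 < l0\<close> by simp
    also have "\<dots> = (\<Sum>i\<in>UNIV. l $ i / l0 * (g i w - b i)) + (f w - p)"
      using \<open>0 < l0\<close> by (simp add: add_divide_distrib sum_divide_distrib)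
    finally show "p \<le> f w + (\<Sum>i\<in>UNIV. l $ i / l0 * (g i w - b i))" by simp
  qed
qed

text \<open>Constraints with \<open>g\<^sub>i = 0\<close> cannot be strictly satisfied when \<open>b\<^sub>i = 0\<close>; they are replaced by
  the equivalent constraint \<open>0 \<le> 1\<close>, and get multiplier \<open>0\<close>.\<close>

lemma lagrange_multipliers_linear:
  fixes f :: "'w::real_vector \<Rightarrow> real" and g :: "'m::finite \<Rightarrow> 'w \<Rightarrow> real"
  assumes C: "convex C" and lin: "linear f" "\<And>i. linear (g i)"
    and opt: "\<And>w. w \<in> C \<Longrightarrow> \<forall>i. g i w \<le> b i \<Longrightarrow> p \<le> f w"
    and slater: "wb \<in> C" "\<And>i. g i \<noteq> (\<lambda>_. 0) \<Longrightarrow> g i wb < b i"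
    and trivial: "\<And>i. g i = (\<lambda>_. 0) \<Longrightarrow> 0 \<le> b i"
  obtains \<mu> where "\<forall>i. 0 \<le> \<mu> i" "\<forall>w\<in>C. p \<le> f w + (\<Sum>i\<in>UNIV. \<mu> i * (g i w - b i))"
proof -
  define nt where "nt i \<longleftrightarrow> g i \<noteq> (\<lambda>_. 0)" for i
  define b' where "b' i = (if nt i then b i else 1)" for i
  have opt': "p \<le> f w" if "w \<in> C" "\<forall>i. g i w \<le> b' i" for w
  proof (rule opt[OF that(1)], intro allI)
    fix i show "g i w \<le> b i"
      using that(2)[rule_format, of i] trivial[of i] by (cases "nt i") (auto simp: b'_def nt_def)
  qed
  have "g i wb < b' i" for i
    using slater(2) by (auto simp: b'_def nt_def)
  then obtain \<mu>0 where \<mu>0: "\<forall>i. 0 \<le> \<mu>0 i"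
    and lagr: "\<And>w. w \<in> C \<Longrightarrow> p \<le> f w + (\<Sum>i\<in>UNIV. \<mu>0 i * (g i w - b' i))"
    using lagrange_multipliers_linear_strict[of C f g b' p wb, OF C lin opt' slater(1)] by blast
  define \<mu> where "\<mu> i = (if nt i then \<mu>0 i else 0)" for i
  show ?thesis
  proof (rule that)
    show "\<forall>i. 0 \<le> \<mu> i" using \<mu>0 by (simp add: \<mu>_def)
    have "(\<Sum>i\<in>UNIV. \<mu>0 i * (g i w - b' i)) \<le> (\<Sum>i\<in>UNIV. \<mu> i * (g i w - b i))" for w
      using \<mu>0 by (intro sum_mono) (simp add: \<mu>_def b'_def nt_def)
    then show "\<forall>w\<in>C. p \<le> f w + (\<Sum>i\<in>UNIV. \<mu> i * (g i w - b i))"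
      using lagr by (meson add_left_mono order_trans)
  qed
qed

lemma interior_of_top_of_set_ray:
  fixes p v :: "'a::real_normed_vector"
  assumes "p \<in> (top_of_set U) interior_of F" and "\<And>t. p + t *\<^sub>R v \<in> U"
  obtains t where "0 < t" "p + t *\<^sub>R v \<in> F"
proof -
  obtain T where "openin (top_of_set U) T" "p \<in> T" "T \<subseteq> F"
    using assms(1) by (auto simp: interior_of_def)
  then obtain e where "0 < e" "ball p e \<inter> U \<subseteq> F"
    by (force simp: openin_contains_ball)
  define t where "t = e / (norm v + 1)"
  have "0 < norm v + 1" by (simp add: add_nonneg_pos)
  then have "0 < t" using \<open>0 < e\<close> by (simp add: t_def)
  have "t * norm v < t * (norm v + 1)" using \<open>0 < t\<close> by simp
  also have "\<dots> = e" using \<open>0 < norm v + 1\<close> by (simp add: t_def)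
  finally have "p + t *\<^sub>R v \<in> ball p e" using \<open>0 < t\<close> by (simp add: dist_norm)
  then show ?thesis using that \<open>0 < t\<close> \<open>ball p e \<inter> U \<subseteq> F\<close> assms(2) by blast
qed

section \<open>Linear forms on the epigraph of the squares\<close>

definition lin_form :: "real^'n \<Rightarrow> real^'n \<Rightarrow> (real^'n) \<times> (real^'n) \<Rightarrow> real" where
  "lin_form d e w = d \<bullet> snd w + 2 * (e \<bullet> fst w)"

definition sq_epigraph :: "((real^'n::finite) \<times> (real^'n)) set" where
  "sq_epigraph = {(x, z). \<forall>j. (x$j)\<^sup>2 \<le> z$j}"

lemma mem_sq_epigraph [simp]: "(x, z) \<in> sq_epigraph \<longleftrightarrow> (\<forall>j. (x$j)\<^sup>2 \<le> z$j)"
  by (simp add: sq_epigraph_def)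

lemma lin_form_coords: "lin_form d e (x, z) = (\<Sum>j\<in>UNIV. d$j * z$j + 2 * (e$j * x$j))"
  by (simp add: lin_form_def inner_vec_def sum.distrib sum_distrib_left)

lemma linear_lin_form: "linear (lin_form d e)"
  by (rule linearI) (simp_all add: lin_form_def inner_add_right algebra_simps)

lemma continuous_on_lin_form: "continuous_on S (lin_form d e)"
  unfolding lin_form_def by (intro continuous_intros)

lemma lin_form_add: "lin_form d e w + lin_form d' e' w = lin_form (d + d') (e + e') w"
  by (simp add: lin_form_def inner_add_left algebra_simps)

lemma lin_form_sum:
  "(\<Sum>i\<in>I. \<mu> i * lin_form (d i) (e i) w) = lin_form (\<Sum>i\<in>I. \<mu> i *\<^sub>R d i) (\<Sum>i\<in>I. \<mu> i *\<^sub>R e i) w"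
  by (simp add: lin_form_def inner_sum_left sum.distrib sum_distrib_left algebra_simps)

lemma lin_form_self_pos:
  assumes "d \<noteq> 0 \<or> e \<noteq> 0"
  shows "0 < lin_form d e (e, d)"
proof -
  have "0 < d \<bullet> d \<or> 0 < e \<bullet> e" and "0 \<le> d \<bullet> d" "0 \<le> e \<bullet> e"
    using assms by auto
  then show ?thesis unfolding lin_form_def fst_conv snd_conv by linarith
qed

lemma lin_form_zero: "lin_form 0 0 = (\<lambda>_. 0)"
  by (simp add: lin_form_def fun_eq_iff)

lemma convex_sq_epigraph: "convex sq_epigraph"
proof (rule convexI, clarsimp)
  fix x z x' z' :: "real^'a" and u v :: real and j
  assume "\<forall>j. (x$j)\<^sup>2 \<le> z$j" "\<forall>j. (x'$j)\<^sup>2 \<le> z'$j" "0 \<le> u" "0 \<le> v" "u + v = 1"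
  moreover have "(u * x$j + v * x'$j)\<^sup>2 \<le> u * (x$j)\<^sup>2 + v * (x'$j)\<^sup>2"
    using convex_power2 \<open>0 \<le> u\<close> \<open>0 \<le> v\<close> \<open>u + v = 1\<close> unfolding convex_on_def by fastforce
  ultimately show "(u * x$j + v * x'$j)\<^sup>2 \<le> u * z$j + v * z'$j"
    by (smt (verit) mult_left_mono)
qed

lemma sq_epigraph_min_1d:
  fixes d e x0 z0 :: real
  assumes feas: "x0\<^sup>2 \<le> z0"
    and min: "\<And>x z. x\<^sup>2 \<le> z \<Longrightarrow> d * z0 + 2 * (e * x0) \<le> d * z + 2 * (e * x)"
  shows "0 \<le> d" and "x0\<^sup>2 < z0 \<Longrightarrow> d = 0 \<and> e = 0"
proof -
  show d: "0 \<le> d" using min[of x0 "z0 + 1"] feas by (simp add: algebra_simps)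
  assume slack: "x0\<^sup>2 < z0"
  have "d * z0 \<le> d * x0\<^sup>2" using min[of x0 "x0\<^sup>2"] by simp
  with d slack have "d = 0" by (smt (verit) mult_strict_left_mono)
  have "0 \<le> z0" using feas by (smt (verit) zero_le_power2)
  then have "2 * (e * x0) \<le> 2 * (e * (x0 - e))"
    using min[of "x0 - e" "z0 + (x0 - e)\<^sup>2"] \<open>d = 0\<close> by simp
  then have "e * e \<le> 0" by (simp add: algebra_simps)
  then have "e = 0" by (metis antisym mult_eq_0_iff zero_le_square)
  with \<open>d = 0\<close> show "d = 0 \<and> e = 0" by simp
qed

lemma lin_form_update:
  "lin_form d e (\<chi> j. if j = k then x else xs$j, \<chi> j. if j = k then z else zs$j)
     = lin_form d e (xs, zs) + (d$k * z + 2 * (e$k * x)) - (d$k * zs$k + 2 * (e$k * xs$k))"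
proof -
  have "lin_form d e (\<chi> j. if j = k then x else xs$j, \<chi> j. if j = k then z else zs$j)
      = (\<Sum>j\<in>UNIV. (d$j * zs$j + 2 * (e$j * xs$j))
           + (if j = k then (d$k * z + 2 * (e$k * x)) - (d$k * zs$k + 2 * (e$k * xs$k)) else 0))"
    unfolding lin_form_coords by (intro sum.cong) auto
  then show ?thesis by (simp add: sum.distrib lin_form_coords)
qed

lemma lin_form_minimizer_on_sq_epigraph:
  assumes feas: "(xs, zs) \<in> sq_epigraph"
    and min: "\<forall>w\<in>sq_epigraph. lin_form d e (xs, zs) \<le> lin_form d e w"
  shows "0 \<le> d$j" and "(xs$k)\<^sup>2 < zs$k \<Longrightarrow> d$k = 0 \<and> e$k = 0"
proof -
  have coord_min: "d$k * zs$k + 2 * (e$k * xs$k) \<le> d$k * z + 2 * (e$k * x)" if "x\<^sup>2 \<le> z" for k x z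
  proof -
    have "(\<chi> j. if j = k then x else xs$j, \<chi> j. if j = k then z else zs$j) \<in> sq_epigraph"
      using feas that by auto
    then show ?thesis using min lin_form_update[of d e k x xs z zs] by fastforce
  qed
  have "(xs$k)\<^sup>2 \<le> zs$k" for k using feas by simp
  then show "0 \<le> d$j" and "(xs$k)\<^sup>2 < zs$k \<Longrightarrow> d$k = 0 \<and> e$k = 0"
    using sq_epigraph_min_1d[OF _ coord_min] by blast+
qed

lemma scaled_parabola_lower_bound:
  fixes w z x v :: real
  assumes "0 < w" "x\<^sup>2 \<le> z"
  shows "w * z / 2 - 2 * v\<^sup>2 / w \<le> w * z + 2 * (v * x)"
proof -
  have "w * z + 2 * (v * x) - (w * z / 2 - 2 * v\<^sup>2 / w) = (w\<^sup>2 * (z - x\<^sup>2) + (w * x + 2 * v)\<^sup>2) / (2 * w)"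
    using assms(1) by (simp add: field_simps power2_eq_square)
  moreover have "0 \<le> (w\<^sup>2 * (z - x\<^sup>2) + (w * x + 2 * v)\<^sup>2) / (2 * w)"
    using assms by simp
  ultimately show ?thesis by linarith
qed

lemma abs_le_one_plus_square: "\<bar>t::real\<bar> \<le> 1 + t\<^sup>2"
proof -
  have "0 \<le> (\<bar>t\<bar> - 1)\<^sup>2" by simp
  then show ?thesis by (simp add: power2_eq_square algebra_simps)
qed

lemma bounded_sq_epigraph_subset:
  assumes "S \<subseteq> sq_epigraph" and "\<And>w j. w \<in> S \<Longrightarrow> snd w $ j \<le> r j"
  shows "bounded S"
proof -
  let ?B = "cbox (\<chi> j. - (r j + 1)) (\<chi> j. r j + 1) :: (real^'a) set"
  have "S \<subseteq> ?B \<times> ?B"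
  proof (intro subsetI)
    fix w assume "w \<in> S"
    obtain x z where w: "w = (x, z)" by (cases w)
    have "(x$j)\<^sup>2 \<le> z$j" "z$j \<le> r j" for j
      using assms \<open>w \<in> S\<close> w by auto
    moreover have "0 \<le> (x$j)\<^sup>2" "\<bar>x$j\<bar> \<le> 1 + (x$j)\<^sup>2" for j
      by (simp_all add: abs_le_one_plus_square)
    ultimately have "- (r j + 1) \<le> x$j \<and> x$j \<le> r j + 1 \<and> - (r j + 1) \<le> z$j \<and> z$j \<le> r j + 1" for j
      by (smt (verit))
    then show "w \<in> ?B \<times> ?B"
      by (simp add: w mem_box_cart)
  qed
  then show ?thesis
    by (rule bounded_subset[OF bounded_Times[OF bounded_cbox bounded_cbox]])
qed

section \<open>The relaxations\<close>

definition mat_diag :: "real^'n^'n \<Rightarrow> real^'n" where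
  "mat_diag P = (\<chi> j. P $ j $ j)"

lemma mat_diag_nth [simp]: "mat_diag P $ j = P $ j $ j"
  by (simp add: mat_diag_def)

lemma lin_form_lift:
  assumes "diag_mat P"
  shows "lin_form (mat_diag P) q (x, \<chi> j. (x$j)\<^sup>2) = x \<bullet> (P *v x) + 2 * (q \<bullet> x)"
  unfolding inner_mult_diag_mat[OF assms] by (simp add: lin_form_def inner_vec_def)

lemma lin_form_mat_diag_frob:
  assumes "diag_mat P"
  shows "lin_form (mat_diag P) q (x, mat_diag X) = frob P X + 2 * (q \<bullet> x)"
  by (simp add: lin_form_def frob_diag_mat[OF assms] inner_vec_def)

lemma feasR_lin_form:
  "feasR A a b = {w \<in> sq_epigraph. \<forall>i. lin_form (mat_diag (A i)) (a i) w \<le> b i}"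
  by (auto simp: feasR_def lin_form_def inner_vec_def)

lemma valR_lin_form:
  "valR D c A a b = (INF w\<in>feasR A a b. ereal (lin_form (mat_diag D) c w))"
  by (simp add: valR_def lin_form_def inner_vec_def)

lemma feasS_diag_in_feasR:
  assumes "\<forall>i. diag_mat (A i)" and "(X, x) \<in> feasS A a b"
  shows "(x, mat_diag X) \<in> feasR A a b"
proof -
  have "psd_mat (X - outer x x)" and "\<forall>i. frob (A i) X + 2 * (a i \<bullet> x) \<le> b i"
    using assms(2) by (auto simp: feasS_def)
  then show ?thesis
    using psd_mat_diag_nonneg
    by (fastforce simp: feasR_lin_form lin_form_mat_diag_frob assms(1) outer_diag)
qed

lemma valR_le_valS:
  assumes "diag_mat D" and "\<forall>i. diag_mat (A i)"
  shows "valR D c A a b \<le> valS D c A a b"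
  unfolding valS_def
proof (rule INF_greatest, clarify)
  fix X x assume "(X, x) \<in> feasS A a b"
  then have "valR D c A a b \<le> ereal (lin_form (mat_diag D) c (x, mat_diag X))"
    unfolding valR_lin_form using assms(2) by (intro INF_lower feasS_diag_in_feasR)
  then show "valR D c A a b \<le> ereal (frob D (fst (X, x)) + 2 * (c \<bullet> snd (X, x)))"
    by (simp add: lin_form_mat_diag_frob[OF assms(1)])
qed

lemma valS_le_valP:
  assumes "diag_mat D" and "\<forall>i. diag_mat (A i)"
  shows "valS D c A a b \<le> valP D c A a b"
  unfolding valP_def
proof (rule INF_greatest)
  fix x assume "x \<in> feasP A a b"
  then have "(outer x x, x) \<in> feasS A a b"
    using assms(2) by (simp add: feasS_def feasP_def sym_mat_outer psd_mat_zero frob_diag_mat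
        inner_mult_diag_mat outer_diag)
  then have "valS D c A a b \<le> ereal (frob D (outer x x) + 2 * (c \<bullet> x))"
    unfolding valS_def by (metis (no_types, lifting) INF_lower fst_conv snd_conv)
  then show "valS D c A a b \<le> ereal (x \<bullet> (D *v x) + 2 * (c \<bullet> x))"
    by (simp add: frob_diag_mat[OF assms(1)] inner_mult_diag_mat[OF assms(1)] outer_diag)
qed

text \<open>From the interior point of (S) one may move in the direction \<open>(A\<^sup>i, a\<^sub>i)\<close>, which strictly
  increases constraint \<open>i\<close> unless it is trivial; so the projection of that point satisfies it strictly.\<close>

lemma feasR_slater_point:
  assumes diagA: "\<forall>i. diag_mat (A i)"
    and interior: "(top_of_set {p. sym_mat (fst p)}) interior_of feasS A a b \<noteq> {}"
  obtains wb where "wb \<in> sq_epigraph"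
    "\<And>i. mat_diag (A i) \<noteq> 0 \<or> a i \<noteq> 0 \<Longrightarrow> lin_form (mat_diag (A i)) (a i) wb < b i"
proof -
  obtain X0 x0 where p0: "(X0, x0) \<in> (top_of_set {p. sym_mat (fst p)}) interior_of feasS A a b"
    using interior by auto
  then have "(X0, x0) \<in> feasS A a b"
    by (rule subsetD[OF interior_of_subset])
  then have feas: "(x0, mat_diag X0) \<in> feasR A a b" and "sym_mat X0"
    by (auto simp: feasS_diag_in_feasR[OF diagA] feasS_def)
  have strict: "lin_form (mat_diag (A i)) (a i) (x0, mat_diag X0) < b i"
    if nontrivial: "mat_diag (A i) \<noteq> 0 \<or> a i \<noteq> 0" for i
  proof -
    let ?g = "lin_form (mat_diag (A i)) (a i)"
    have "(X0, x0) + t *\<^sub>R (A i, a i) \<in> {p. sym_mat (fst p)}" for t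
      using \<open>sym_mat X0\<close> diagA by (simp add: sym_mat_add_scaleR diag_mat_imp_sym_mat)
    then obtain t where "0 < t" "(X0, x0) + t *\<^sub>R (A i, a i) \<in> feasS A a b"
      by (rule interior_of_top_of_set_ray[OF p0])
    then have "(x0 + t *\<^sub>R a i, mat_diag (X0 + t *\<^sub>R A i)) \<in> feasR A a b"
      by (simp add: feasS_diag_in_feasR[OF diagA])
    then have "?g (x0 + t *\<^sub>R a i, mat_diag (X0 + t *\<^sub>R A i)) \<le> b i"
      by (simp add: feasR_lin_form)
    moreover have "?g (x0 + t *\<^sub>R a i, mat_diag (X0 + t *\<^sub>R A i))
        = ?g (x0, mat_diag X0) + t * ?g (a i, mat_diag (A i))"
      by (simp add: lin_form_def mat_diag_def inner_vec_def sum.distrib sum_distrib_left algebra_simps)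
    moreover have "0 < ?g (a i, mat_diag (A i))"
      using nontrivial by (rule lin_form_self_pos)
    ultimately show ?thesis
      using \<open>0 < t\<close> by (smt (verit) mult_pos_pos)
  qed
  moreover have "(x0, mat_diag X0) \<in> sq_epigraph"
    using feas by (simp add: feasR_lin_form)
  ultimately show ?thesis
    using that by blast
qed

text \<open>Weighting the constraints by the \<open>y\<close> of Assumption 1(ii) gives a single constraint whose
  coefficients \<open>W\<close> of \<open>z\<close> are positive; it bounds every \<open>z\<^sub>j\<close>.\<close>

lemma bounded_feasR:
  assumes "\<exists>y. (\<forall>i. 0 \<le> y i) \<and> pd_mat (\<Sum>i\<in>UNIV. y i *\<^sub>R A i)"
  shows "bounded (feasR A a b)"
proof -
  obtain y where y: "\<forall>i. 0 \<le> y i" and pd: "pd_mat (\<Sum>i\<in>UNIV. y i *\<^sub>R A i)"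
    using assms by blast
  define W where "W = (\<Sum>i\<in>UNIV. y i *\<^sub>R mat_diag (A i))"
  define V where "V = (\<Sum>i\<in>UNIV. y i *\<^sub>R a i)"
  define K where "K = (\<Sum>i\<in>UNIV. y i * b i) + (\<Sum>j\<in>UNIV. 2 * (V$j)\<^sup>2 / W$j)"
  have W_pos: "0 < W$j" for j
    using pd_mat_diag_pos[OF pd, of j] by (simp add: W_def)
  have "z$j \<le> 2 * K / W$j" if w: "(x, z) \<in> feasR A a b" for x z j
  proof -
    have epi: "\<forall>j. (x$j)\<^sup>2 \<le> z$j"
      using w by (simp add: feasR_lin_form)
    then have z_nonneg: "0 \<le> z$l" for l
      using zero_le_power2[of "x$l"] by (meson order_trans)
    have "(\<Sum>j\<in>UNIV. W$j * z$j / 2 - 2 * (V$j)\<^sup>2 / W$j) \<le> lin_form W V (x, z)"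
      unfolding lin_form_coords using W_pos epi by (intro sum_mono scaled_parabola_lower_bound) auto
    also have "lin_form W V (x, z) = (\<Sum>i\<in>UNIV. y i * lin_form (mat_diag (A i)) (a i) (x, z))"
      by (simp add: lin_form_sum W_def V_def)
    also have "\<dots> \<le> (\<Sum>i\<in>UNIV. y i * b i)"
      using w y by (intro sum_mono mult_left_mono) (auto simp: feasR_lin_form)
    finally have "(\<Sum>j\<in>UNIV. W$j * z$j / 2) \<le> K"
      by (simp add: K_def sum_subtractf)
    moreover have "W$j * z$j / 2 \<le> (\<Sum>j\<in>UNIV. W$j * z$j / 2)"
      using W_pos z_nonneg by (intro member_le_sum) (auto intro: mult_nonneg_nonneg less_imp_le)
    ultimately show ?thesis
      using W_pos[of j] by (simp add: field_simps)
  qed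
  then show ?thesis
    by (intro bounded_sq_epigraph_subset[of _ "\<lambda>j. 2 * K / W$j"]) (auto simp: feasR_lin_form)
qed

lemma closed_feasR: "closed (feasR A a b)"
proof -
  have feasR_eq: "feasR A a b = (\<Inter>j. {w. (fst w $ j)\<^sup>2 \<le> snd w $ j})
      \<inter> (\<Inter>i. {w. lin_form (mat_diag (A i)) (a i) w \<le> b i})"
    by (auto simp: feasR_lin_form)
  show ?thesis
    unfolding feasR_eq by (intro closed_Int closed_INT ballI closed_Collect_le continuous_intros continuous_on_lin_form)
qed

lemma feasR_has_minimizer:
  assumes "\<forall>i. diag_mat (A i)" and "feasP A a b \<noteq> {}"
    and "\<exists>y. (\<forall>i. 0 \<le> y i) \<and> pd_mat (\<Sum>i\<in>UNIV. y i *\<^sub>R A i)"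
  obtains ws where "ws \<in> feasR A a b" "\<forall>w\<in>feasR A a b. lin_form d e ws \<le> lin_form d e w"
proof -
  obtain x where "x \<in> feasP A a b" using assms(2) by blast
  then have "(x, \<chi> j. (x$j)\<^sup>2) \<in> feasR A a b"
    using assms(1) by (simp add: feasR_lin_form feasP_def lin_form_lift)
  then have "feasR A a b \<noteq> {}" by blast
  moreover have "compact (feasR A a b)"
    using bounded_feasR[OF assms(3)] closed_feasR by (simp add: compact_eq_bounded_closed)
  ultimately have "\<exists>ws\<in>feasR A a b. \<forall>w\<in>feasR A a b. lin_form d e ws \<le> lin_form d e w"
    using continuous_on_lin_form by (intro continuous_attains_inf)
  then show ?thesis
    using that by blast
qed

section \<open>Exactness\<close>

definition lagr_diag :: "real^'n^'n \<Rightarrow> ('m::finite \<Rightarrow> real^'n^'n) \<Rightarrow> ('m \<Rightarrow> real) \<Rightarrow> real^'n" where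
  "lagr_diag D A \<mu> = mat_diag D + (\<Sum>i\<in>UNIV. \<mu> i *\<^sub>R mat_diag (A i))"

definition lagr_lin :: "real^'n \<Rightarrow> ('m::finite \<Rightarrow> real^'n) \<Rightarrow> ('m \<Rightarrow> real) \<Rightarrow> real^'n" where
  "lagr_lin c a \<mu> = c + (\<Sum>i\<in>UNIV. \<mu> i *\<^sub>R a i)"

lemma Sk_lagr:
  "\<mu> \<in> Sk D c A a k \<longleftrightarrow> lagr_diag D A \<mu> $ k = 0 \<and> lagr_lin c a \<mu> $ k = 0
     \<and> (\<forall>j. j \<noteq> k \<longrightarrow> 0 \<le> lagr_diag D A \<mu> $ j) \<and> (\<forall>i. 0 \<le> \<mu> i)"
  by (simp add: Sk_def lagr_diag_def lagr_lin_def)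

lemma lagrangian_lin_form:
  "lin_form (mat_diag D) c w + (\<Sum>i\<in>UNIV. \<mu> i * lin_form (mat_diag (A i)) (a i) w)
     = lin_form (lagr_diag D A \<mu>) (lagr_lin c a \<mu>) w"
  by (simp add: lin_form_sum lin_form_add lagr_diag_def lagr_lin_def)

lemma feasR_minimizer_multipliers:
  assumes diagA: "\<forall>i. diag_mat (A i)"
    and interior: "(top_of_set {p. sym_mat (fst p)}) interior_of feasS A a b \<noteq> {}"
    and ws: "ws \<in> feasR A a b"
    and min: "\<forall>w\<in>feasR A a b. lin_form (mat_diag D) c ws \<le> lin_form (mat_diag D) c w"
  obtains \<mu> where "\<forall>i. 0 \<le> \<mu> i"
    "\<forall>w\<in>sq_epigraph.
       lin_form (lagr_diag D A \<mu>) (lagr_lin c a \<mu>) ws \<le> lin_form (lagr_diag D A \<mu>) (lagr_lin c a \<mu>) w"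
proof -
  define g where "g i = lin_form (mat_diag (A i)) (a i)" for i
  define f where "f = lin_form (mat_diag D) c"
  have ws_feas: "\<And>i. g i ws \<le> b i"
    using ws by (auto simp: feasR_lin_form g_def)
  obtain wb where wb: "wb \<in> sq_epigraph" "\<And>i. g i \<noteq> (\<lambda>_. 0) \<Longrightarrow> g i wb < b i"
    using feasR_slater_point[OF diagA interior] unfolding g_def by (metis lin_form_zero)
  have lin: "linear f" "\<And>i. linear (g i)"
    by (simp_all add: f_def g_def linear_lin_form)
  have opt: "f ws \<le> f w" if "w \<in> sq_epigraph" "\<forall>i. g i w \<le> b i" for w
  proof -
    have "w \<in> feasR A a b" using that by (simp add: feasR_lin_form g_def)
    then show ?thesis using min by (simp add: f_def)
  qed
  have trivial: "0 \<le> b i" if "g i = (\<lambda>_. 0)" for i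
    using ws_feas[of i] that by simp
  obtain \<mu> where \<mu>: "\<forall>i. 0 \<le> \<mu> i"
    and lagr: "\<forall>w\<in>sq_epigraph. f ws \<le> f w + (\<Sum>i\<in>UNIV. \<mu> i * (g i w - b i))"
    using lagrange_multipliers_linear[of sq_epigraph f g b "f ws" wb, OF convex_sq_epigraph lin opt wb trivial]
    by blast
  have "(\<Sum>i\<in>UNIV. \<mu> i * g i ws) \<le> (\<Sum>i\<in>UNIV. \<mu> i * b i)"
    using \<mu> ws_feas by (intro sum_mono mult_left_mono) auto
  moreover have "f ws \<le> f w + (\<Sum>i\<in>UNIV. \<mu> i * g i w) - (\<Sum>i\<in>UNIV. \<mu> i * b i)"
    if "w \<in> sq_epigraph" for w
    using lagr that by (simp add: right_diff_distrib sum_subtractf add_diff_eq)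
  ultimately have "f ws + (\<Sum>i\<in>UNIV. \<mu> i * g i ws) \<le> f w + (\<Sum>i\<in>UNIV. \<mu> i * g i w)"
    if "w \<in> sq_epigraph" for w
    using that by fastforce
  with \<mu> show ?thesis
    using that by (simp add: f_def g_def lagrangian_lin_form)
qed

lemma lagr_diag_zero_imp_NH:
  assumes part: "partition_on UNIV Ps"
    and xi: "\<forall>Nh\<in>Ps. \<forall>i. \<exists>\<xi>. \<forall>j\<in>Nh. A i $ j $ j = \<xi>"
    and uniq: "\<forall>Nh\<in>Ps. \<exists>j. unique_argmin D Nh j"
    and nonneg: "\<forall>j. 0 \<le> lagr_diag D A \<mu> $ j"
    and zero: "lagr_diag D A \<mu> $ k = 0"
  shows "k \<in> NH D Ps"
proof -
  obtain Nh where Nh: "Nh \<in> Ps" "k \<in> Nh"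
    using part unfolding partition_on_def by (metis UNIV_I Union_iff)
  then obtain jh where jh: "unique_argmin D Nh jh"
    using uniq by blast
  have "jh = k"
  proof (rule ccontr)
    assume "jh \<noteq> k"
    then have "jh \<in> Nh" and "D $ jh $ jh < D $ k $ k"
      using jh Nh(2) by (auto simp: unique_argmin_def)
    moreover have "A i $ jh $ jh = A i $ k $ k" for i
      using xi Nh \<open>jh \<in> Nh\<close> by metis
    ultimately have "lagr_diag D A \<mu> $ jh < lagr_diag D A \<mu> $ k"
      by (simp add: lagr_diag_def)
    with nonneg zero show False by (metis not_less)
  qed
  then show ?thesis
    using jh Nh(1) by (auto simp: NH_def)
qed

lemma valP_le_valR_at_lifted_minimizer:
  assumes "diag_mat D" and "\<forall>i. diag_mat (A i)"
    and feas: "(x, \<chi> j. (x$j)\<^sup>2) \<in> feasR A a b"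
    and min: "\<forall>w\<in>feasR A a b. lin_form (mat_diag D) c (x, \<chi> j. (x$j)\<^sup>2) \<le> lin_form (mat_diag D) c w"
  shows "valP D c A a b \<le> valR D c A a b"
proof -
  have "x \<in> feasP A a b"
    using feas assms(2) by (simp add: feasR_lin_form feasP_def lin_form_lift)
  then have "valP D c A a b \<le> ereal (x \<bullet> (D *v x) + 2 * (c \<bullet> x))"
    unfolding valP_def by (rule INF_lower)
  also have "\<dots> = lin_form (mat_diag D) c (x, \<chi> j. (x$j)\<^sup>2)"
    by (simp add: lin_form_lift assms(1))
  also have "\<dots> \<le> valR D c A a b"
    unfolding valR_lin_form using min by (intro INF_greatest) simp
  finally show ?thesis .
qed

lemma sq_epigraph_tight_if_Sk_empty:
  assumes part: "partition_on UNIV Ps"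
    and xi: "\<forall>Nh\<in>Ps. \<forall>i. \<exists>\<xi>. \<forall>j\<in>Nh. A i $ j $ j = \<xi>"
    and uniq: "\<forall>Nh\<in>Ps. \<exists>j. unique_argmin D Nh j"
    and Sk_empty: "\<forall>k\<in>NH D Ps. Sk D c A a k = {}"
    and \<mu>: "\<forall>i. 0 \<le> \<mu> i"
    and epi: "(xs, zs) \<in> sq_epigraph"
    and min: "\<forall>w\<in>sq_epigraph. lin_form (lagr_diag D A \<mu>) (lagr_lin c a \<mu>) (xs, zs)
                \<le> lin_form (lagr_diag D A \<mu>) (lagr_lin c a \<mu>) w"
  shows "zs = (\<chi> j. (xs$j)\<^sup>2)"
proof -
  note kkt = lin_form_minimizer_on_sq_epigraph[OF epi min]
  have "(xs$k)\<^sup>2 = zs$k" for k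
  proof (rule ccontr)
    assume "(xs$k)\<^sup>2 \<noteq> zs$k"
    then have "(xs$k)\<^sup>2 < zs$k"
      using epi by (simp add: order_le_neq_trans)
    then have "lagr_diag D A \<mu> $ k = 0" "lagr_lin c a \<mu> $ k = 0"
      using kkt(2) by blast+
    moreover from this(1) have "k \<in> NH D Ps"
      using lagr_diag_zero_imp_NH[OF part xi uniq] kkt(1) by blast
    ultimately have "\<mu> \<in> Sk D c A a k"
      using kkt(1) \<mu> by (simp add: Sk_lagr)
    with Sk_empty \<open>k \<in> NH D Ps\<close> show False by blast
  qed
  then show ?thesis
    by (simp add: vec_eq_iff)
qed

lemma exact_if_Sk_empty:
  fixes D :: "real^'n::finite^'n" and c :: "real^'n"
    and A :: "'m::finite \<Rightarrow> real^'n^'n" and a :: "'m \<Rightarrow> real^'n" and b :: "'m \<Rightarrow> real"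
  assumes diagD: "diag_mat D" and diagA: "\<forall>i. diag_mat (A i)"
    and A1_i: "feasP A a b \<noteq> {}"
    and A1_ii: "\<exists>y. (\<forall>i. y i \<ge> 0) \<and> pd_mat (\<Sum>i\<in>UNIV. y i *\<^sub>R A i)"
    and A1_iii: "(top_of_set {p. sym_mat (fst p)}) interior_of (feasS A a b) \<noteq> {}"
    and part: "partition_on UNIV Ps"
    and xi: "\<forall>Nh\<in>Ps. \<forall>i. \<exists>\<xi>. \<forall>j\<in>Nh. A i $ j $ j = \<xi>"
    and uniq: "\<forall>Nh\<in>Ps. \<exists>j. unique_argmin D Nh j"
    and Sk_empty: "\<forall>k\<in>NH D Ps. Sk D c A a k = {}"
  shows "valR D c A a b = valS D c A a b \<and> valS D c A a b = valP D c A a b"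
proof -
  obtain ws where ws: "ws \<in> feasR A a b"
    and min: "\<forall>w\<in>feasR A a b. lin_form (mat_diag D) c ws \<le> lin_form (mat_diag D) c w"
    using feasR_has_minimizer[where d = "mat_diag D" and e = c, OF diagA A1_i A1_ii] by blast
  obtain xs zs where xz: "ws = (xs, zs)"
    by (cases ws)
  obtain \<mu> where "\<forall>i. 0 \<le> \<mu> i"
    and "\<forall>w\<in>sq_epigraph. lin_form (lagr_diag D A \<mu>) (lagr_lin c a \<mu>) ws
           \<le> lin_form (lagr_diag D A \<mu>) (lagr_lin c a \<mu>) w"
    using feasR_minimizer_multipliers[OF diagA A1_iii ws min] by blast
  moreover have "(xs, zs) \<in> sq_epigraph"
    using ws xz by (simp add: feasR_lin_form)
  ultimately have "zs = (\<chi> j. (xs$j)\<^sup>2)"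
    using sq_epigraph_tight_if_Sk_empty[OF part xi uniq Sk_empty] xz by blast
  then have "valP D c A a b \<le> valR D c A a b"
    using valP_le_valR_at_lifted_minimizer[OF diagD diagA] ws min xz by blast
  moreover have "valR D c A a b \<le> valS D c A a b" "valS D c A a b \<le> valP D c A a b"
    using valR_le_valS[OF diagD diagA] valS_le_valP[OF diagD diagA] by blast+
  ultimately show ?thesis
    by (meson order_antisym order_trans)
qed

lemma Sk_empty_if_sign_pattern:
  assumes "(0 < c $ k \<and> (\<forall>i. 0 < a i $ k)) \<or> (c $ k < 0 \<and> (\<forall>i. a i $ k < 0))"
  shows "Sk D c A a k = {}"
proof (intro equals0I)
  fix \<mu> assume "\<mu> \<in> Sk D c A a k"
  then have sum_zero: "c $ k + (\<Sum>i\<in>UNIV. \<mu> i * a i $ k) = 0" and \<mu>: "\<forall>i. 0 \<le> \<mu> i"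
    by (auto simp: Sk_def)
  from assms show False
  proof
    assume pos: "0 < c $ k \<and> (\<forall>i. 0 < a i $ k)"
    then have "0 \<le> (\<Sum>i\<in>UNIV. \<mu> i * a i $ k)"
      using \<mu> by (intro sum_nonneg) (simp add: less_imp_le)
    with pos sum_zero show False by linarith
  next
    assume neg: "c $ k < 0 \<and> (\<forall>i. a i $ k < 0)"
    then have "(\<Sum>i\<in>UNIV. \<mu> i * a i $ k) \<le> 0"
      using \<mu> by (intro sum_nonpos) (simp add: mult_nonneg_nonpos less_imp_le)
    with neg sum_zero show False by linarith
  qed
qed

theorem theorem3:
  fixes D :: "real^'n::finite^'n" and c :: "real^'n"
    and A :: "'m::finite \<Rightarrow> real^'n^'n" and a :: "'m \<Rightarrow> real^'n" and b :: "'m \<Rightarrow> real"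
    and Ps :: "'n set set"
  assumes diagD: "diag_mat D"
    and diagA: "\<forall>i. diag_mat (A i)"
    \<comment> \<open>Assumption 1\<close>
    and A1_i: "feasP A a b \<noteq> {}"
    and A1_ii: "\<exists>y. (\<forall>i. y i \<ge> 0) \<and> pd_mat (\<Sum>i\<in>UNIV. y i *\<^sub>R A i)"
    and A1_iii: "(top_of_set {p :: (real^'n^'n) \<times> (real^'n). sym_mat (fst p)}) interior_of (feasS A a b) \<noteq> {}"
    \<comment> \<open>partition setting\<close>
    and part: "partition_on UNIV Ps"
    and xi: "\<forall>Nh\<in>Ps. \<forall>i. \<exists>\<xi>. \<forall>j\<in>Nh. A i $ j $ j = \<xi>"
    and uniq: "\<forall>Nh\<in>Ps. \<exists>j. unique_argmin D Nh j"
  shows "((\<forall>k\<in>NH D Ps. Sk D c A a k = {}) \<longrightarrow>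
            valR D c A a b = valS D c A a b \<and> valS D c A a b = valP D c A a b)
       \<and> ((\<forall>j\<in>NH D Ps. (c $ j > 0 \<and> (\<forall>i. a i $ j > 0)) \<or> (c $ j < 0 \<and> (\<forall>i. a i $ j < 0))) \<longrightarrow>
            valR D c A a b = valS D c A a b \<and> valS D c A a b = valP D c A a b)"
proof (rule conjI; rule impI)
  show "valR D c A a b = valS D c A a b \<and> valS D c A a b = valP D c A a b"
    if "\<forall>k\<in>NH D Ps. Sk D c A a k = {}"
    using exact_if_Sk_empty[OF assms] that by blast
  show "valR D c A a b = valS D c A a b \<and> valS D c A a b = valP D c A a b"
    if "\<forall>j\<in>NH D Ps. (c $ j > 0 \<and> (\<forall>i. a i $ j > 0)) \<or> (c $ j < 0 \<and> (\<forall>i. a i $ j < 0))"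
    using exact_if_Sk_empty[OF assms] that Sk_empty_if_sign_pattern by blast
qed

end
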